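(* Define binary words by $a_0=0$, $b_0=1$, $a_{n+1}=a_nb_n$, $b_{n+1}=b_na_n$ (so $|a_n|=2^n$). For every integer $u>0$ and every $n$ with $u\le |a_n|/4$, among the positions $i\in\{1,\ldots,2^n-u\}$ there are at least $2^n/4$ positions where the $i$-th and $(i+u)$-th bits of $a_n$ coincide and at least $2^n/4$ positions where they differ. *)

theory Defs
  imports Complex_Main
begin

(* Thue--Morse type words: a_0 = 0, b_0 = 1, a_{n+1} = a_n b_n, b_{n+1} = b_n a_n.
   Words are lists of bits (0/1 as nat); the i-th bit (1-indexed) of w is w ! (i - 1). *)
fun tm_a :: "nat \<Rightarrow> nat list" and tm_b :: "nat \<Rightarrow> nat list" where
  "tm_a 0 = [0]"
| "tm_b 0 = [1]"
| "tm_a (Suc n) = tm_a n @ tm_b n"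
| "tm_b (Suc n) = tm_b n @ tm_a n"

end

theory Submission
  imports Defs
begin

(* The word tm_a n is the prefix of length 2^n of the Thue--Morse sequence t, where t k
   is the parity of the binary digit sum of k; equivalently t 0 = False, t (2j) = t j and
   t (2j+1) = \<not> t j.  For a shift u and a length L let agree L u and differ L u count the
   k < L with t k = t (k+u), resp. t k \<noteq> t (k+u).  Splitting k by parity and using the
   recursion of t gives four recurrences that halve both the length and the shift, with
   agree and differ exchanged for odd shifts.  Calling u balanced at level n when both
   counts over the 2^n - u admissible positions are at least 2^n/4, induction on n shows
   that every shift 0 < u \<le> 2^n/4 is balanced: even shifts inherit the property from
   u/2, odd shifts 2v+1 from v and v+1, and the shift 1 is handled directly because
   t (2j) \<noteq> t (2j+1) for all j.  *)

fun thue_morse :: "nat \<Rightarrow> bool" where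
  "thue_morse n = (if n = 0 then False else thue_morse (n div 2) \<noteq> odd n)"
declare thue_morse.simps[simp del]

lemma thue_morse_0 [simp]: "\<not> thue_morse 0"
  by (simp add: thue_morse.simps)

lemma thue_morse_even [simp]: "thue_morse (2 * j) = thue_morse j"
  by (subst thue_morse.simps) simp

lemma thue_morse_odd [simp]: "thue_morse (Suc (2 * j)) = (\<not> thue_morse j)"
  by (subst thue_morse.simps) simp

(* Adding a new leading binary digit flips the sequence; this is what the
   concatenation a_{n+1} = a_n b_n with b_n the complement of a_n expresses. *)
lemma thue_morse_high_bit: "j < 2 ^ n \<Longrightarrow> thue_morse (2 ^ n + j) = (\<not> thue_morse j)"
proof (induction n arbitrary: j)
  case 0
  then show ?case using thue_morse_odd[of 0] by simp
next
  case (Suc n)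
  show ?case
  proof (cases "even j")
    case True
    then obtain i where "j = 2 * i" by (rule evenE)
    with Suc show ?thesis using thue_morse_even[of "2 ^ n + i"] Suc.IH[of i] by simp
  next
    case False
    then obtain i where "j = 2 * i + 1" by (rule oddE)
    with Suc show ?thesis using thue_morse_odd[of "2 ^ n + i"] Suc.IH[of i] by simp
  qed
qed

lemma tm_length: "length (tm_a n) = 2 ^ n \<and> length (tm_b n) = 2 ^ n"
  by (induction n) auto

lemma tm_nth:
  "k < 2 ^ n \<Longrightarrow> tm_a n ! k = of_bool (thue_morse k) \<and> tm_b n ! k = of_bool (\<not> thue_morse k)"
proof (induction n arbitrary: k)
  case 0
  then show ?case by simp
next
  case (Suc n)
  show ?case
  proof (cases "k < 2 ^ n")
    case True
    then show ?thesis using Suc.IH tm_length[of n] by (simp add: nth_append)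
  next
    case False
    define j where "j = k - 2 ^ n"
    have j: "k = 2 ^ n + j" "j < 2 ^ n"
      using False Suc.prems unfolding j_def by auto
    then show ?thesis
      using Suc.IH[OF j(2)] tm_length[of n] thue_morse_high_bit[OF j(2)] by (simp add: nth_append)
  qed
qed

lemma card_split_parity:
  "card {k. k < (L::nat) \<and> P k}
     = card {j. j < (L + 1) div 2 \<and> P (2 * j)} + card {j. j < L div 2 \<and> P (2 * j + 1)}"
proof -
  let ?E = "{j. j < (L + 1) div 2 \<and> P (2 * j)}" and ?O = "{j. j < L div 2 \<and> P (2 * j + 1)}"
  have "{k. k < L \<and> P k} = (\<lambda>j. 2 * j) ` ?E \<union> (\<lambda>j. 2 * j + 1) ` ?O"
  proof (intro set_eqI iffI)
    fix k assume "k \<in> {k. k < L \<and> P k}"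
    then show "k \<in> (\<lambda>j. 2 * j) ` ?E \<union> (\<lambda>j. 2 * j + 1) ` ?O"
      by (cases "even k") (auto elim!: evenE oddE intro!: image_eqI)
  qed auto
  moreover have "(\<lambda>j. 2 * j) ` ?E \<inter> (\<lambda>j. 2 * j + 1) ` ?O = {}" by auto presburger
  ultimately show ?thesis
    by (simp add: card_Un_disjoint card_image inj_on_def)
qed

definition agree :: "nat \<Rightarrow> nat \<Rightarrow> nat" where
  "agree L u = card {k. k < L \<and> thue_morse k = thue_morse (k + u)}"
definition differ :: "nat \<Rightarrow> nat \<Rightarrow> nat" where
  "differ L u = card {k. k < L \<and> thue_morse k \<noteq> thue_morse (k + u)}"

(* Instance of the even recursion in the shape produced by shifting odd arguments. *)
lemma thue_morse_double_Suc [simp]: "thue_morse (Suc (Suc (2 * m))) = thue_morse (Suc m)"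
  using thue_morse_even[of "Suc m"] by simp

(* Halving recurrences: an even shift 2v acts as v on both parity classes, an odd
   shift 2v+1 moves each class to the other one, with shift v or v+1. *)
lemma agree_even_shift: "agree L (2 * v) = agree ((L + 1) div 2) v + agree (L div 2) v"
  unfolding agree_def
  by (subst card_split_parity)
     (auto simp add: distrib_left[symmetric] simp del: distrib_left_numeral intro!: arg_cong[where f = card])
lemma differ_even_shift: "differ L (2 * v) = differ ((L + 1) div 2) v + differ (L div 2) v"
  unfolding differ_def
  by (subst card_split_parity)
     (auto simp add: distrib_left[symmetric] simp del: distrib_left_numeral intro!: arg_cong[where f = card])
lemma differ_odd_shift: "differ L (2 * v + 1) = agree ((L + 1) div 2) v + agree (L div 2) (v + 1)"
  unfolding differ_def agree_def
  by (subst card_split_parity)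
     (auto simp add: distrib_left[symmetric] simp del: distrib_left_numeral intro!: arg_cong[where f = card])

lemma agree_odd_shift: "agree L (2 * v + 1) = differ ((L + 1) div 2) v + differ (L div 2) (v + 1)"
  unfolding differ_def agree_def
  by (subst card_split_parity)
     (auto simp add: distrib_left[symmetric] simp del: distrib_left_numeral intro!: arg_cong[where f = card])

definition balanced :: "nat \<Rightarrow> nat \<Rightarrow> bool" where
  "balanced n u \<longleftrightarrow> 2 ^ n \<le> 4 * agree (2 ^ n - u) u \<and> 2 ^ n \<le> 4 * differ (2 ^ n - u) u"

(* Even shifts: both counts for 2v at level n+1 are twice those for v at level n. *)
lemma balanced_double:
  assumes "balanced n v"
  shows "balanced (Suc n) (2 * v)"
proof -
  have L: "2 ^ Suc n - 2 * v = 2 * (2 ^ n - v)"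
    by (simp add: diff_mult_distrib2)
  have "agree (2 ^ Suc n - 2 * v) (2 * v) = 2 * agree (2 ^ n - v) v"
       "differ (2 ^ Suc n - 2 * v) (2 * v) = 2 * differ (2 ^ n - v) v"
    unfolding L agree_even_shift differ_even_shift by simp_all
  then show ?thesis using assms(1) unfolding balanced_def by simp
qed

(* At least half the positions differ from their successor, since t (2j) \<noteq> t (2j+1). *)
lemma differ_one_lower: "(L + 1) div 2 \<le> differ L 1"
proof -
  have "agree M 0 = M" for M unfolding agree_def by simp
  then show ?thesis using differ_odd_shift[of L 0] by simp
qed

lemma balanced_one:
  assumes "1 \<le> n"
  shows "balanced (Suc n) 1"
proof -
  have differ0: "differ M 0 = 0" for M unfolding differ_def by simp
  have "(1::nat) \<le> 2 ^ n" by simp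
  then have L: "2 ^ Suc n - 1 = 2 * (2 ^ n - 1) + (1::nat)"
    unfolding power_Suc by arith
  have half: "2 ^ n = 2 * (2::nat) ^ (n - 1)" using assms by (metis Suc_diff_le diff_Suc_1 power_Suc)
  have "2 ^ Suc n \<le> 4 * differ (2 ^ n - 1) 1"
    using differ_one_lower[of "2 ^ n - 1"] half by simp
  moreover have "agree (2 ^ Suc n - 1) 1 = differ (2 ^ n - 1) 1"
    using agree_odd_shift[of "2 ^ Suc n - 1" 0] L differ0 by simp
  moreover have "2 ^ Suc n \<le> 4 * differ (2 ^ Suc n - 1) 1"
    using differ_one_lower[of "2 ^ Suc n - 1"] by simp
  ultimately show ?thesis unfolding balanced_def by simp
qed

(* Odd shifts: the counts for 2v+1 at level n+1 are sums of the swapped counts for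
   v and v+1 at level n. *)
lemma balanced_odd:
  assumes "balanced n v" and "balanced n (v + 1)" and "v < 2 ^ n"
  shows "balanced (Suc n) (2 * v + 1)"
proof -
  have L: "2 ^ Suc n - (2 * v + 1) = 2 * (2 ^ n - (v + 1)) + 1"
    using assms(3) by (simp add: diff_mult_distrib2)
  have "agree (2 ^ Suc n - (2 * v + 1)) (2 * v + 1) = differ (2 ^ n - v) v + differ (2 ^ n - (v + 1)) (v + 1)"
       "differ (2 ^ Suc n - (2 * v + 1)) (2 * v + 1) = agree (2 ^ n - v) v + agree (2 ^ n - (v + 1)) (v + 1)"
    unfolding L agree_odd_shift differ_odd_shift using assms(3) by (simp_all add: Suc_diff_Suc)
  then show ?thesis using assms(1,2) unfolding balanced_def by simp
qed

(* Since 4 divides 2^n once 2^n \<ge> 6, the bound 4v+2 \<le> 2^n improves to 4(v+1) \<le> 2^n;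
   this lets the odd case apply the induction hypothesis to v+1. *)
lemma four_times_succ_le_power:
  assumes "4 * v + 2 \<le> (2::nat) ^ n" and "0 < v"
  shows "4 * (v + 1) \<le> (2::nat) ^ n"
proof -
  have "\<not> n < 2"
  proof
    assume "n < 2"
    then have "(2::nat) ^ n \<le> 2 ^ 1" by (intro power_increasing) auto
    with assms show False by simp
  qed
  then obtain k where "n = k + 2" by (metis add.commute le_Suc_ex not_less)
  then have "(2::nat) ^ n = 4 * 2 ^ k" by (simp add: power_add)
  with assms(1) show ?thesis by presburger
qed

lemma shifts_balanced:
  assumes "0 < u" and "4 * u \<le> 2 ^ n"
  shows "balanced n u"
  using assms
proof (induction n arbitrary: u)
  case 0
  then show ?case by simp
next
  case (Suc n)
  show ?case
  proof (cases "even u")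
    case True
    then obtain v where "u = 2 * v" by (rule evenE)
    with Suc show ?thesis using balanced_double[of n v] by simp
  next
    case False
    then obtain v where u: "u = 2 * v + 1" by (rule oddE)
    show ?thesis
    proof (cases "v = 0")
      case True
      have "1 \<le> n" using Suc.prems u True by (cases n) auto
      then show ?thesis using balanced_one u True by simp
    next
      case False
      have "4 * (v + 1) \<le> 2 ^ n"
        using four_times_succ_le_power[of v n] Suc.prems u False by simp
      then show ?thesis using Suc.IH[of v] Suc.IH[of "v + 1"] balanced_odd[of n v] u False by simp
    qed
  qed
qed

lemma card_one_indexed_pairs:
  "card {i \<in> {1..M::nat}. R (i - 1) (i + u - 1)} = card {k. k < M \<and> R k (k + u)}"
proof -
  have "{i \<in> {1..M}. R (i - 1) (i + u - 1)} = Suc ` {k. k < M \<and> R k (k + u)}"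
  proof (intro set_eqI iffI)
    fix i assume "i \<in> {i \<in> {1..M}. R (i - 1) (i + u - 1)}"
    then have "i = Suc (i - 1)" and "i - 1 \<in> {k. k < M \<and> R k (k + u)}"
      by (auto simp: add.commute[of _ u])
    then show "i \<in> Suc ` {k. k < M \<and> R k (k + u)}" by (rule image_eqI)
  qed auto
  then show ?thesis by (simp add: card_image)
qed

lemma tm_a_equal_bits:
  assumes "k < 2 ^ n - u"
  shows "(tm_a n ! k = tm_a n ! (k + u)) = (thue_morse k = thue_morse (k + u))"
  using tm_nth[of k n] tm_nth[of "k + u" n] assms by simp

lemma real_quarter_bound: "(2::nat) ^ n \<le> 4 * c \<Longrightarrow> (2::real) ^ n / 4 \<le> real c"
proof -
  assume "(2::nat) ^ n \<le> 4 * c"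
  then have "real (2 ^ n) \<le> real (4 * c)" by (simp only: of_nat_le_iff)
  then show ?thesis by simp
qed

theorem mainTheorem4:
  fixes u n :: nat
  assumes "u > 0"
    and "real u \<le> real (length (tm_a n)) / 4"
  shows "real (card {i \<in> {1..2^n - u}. tm_a n ! (i - 1) = tm_a n ! (i + u - 1)}) \<ge> (2::real)^n / 4
       \<and> real (card {i \<in> {1..2^n - u}. tm_a n ! (i - 1) \<noteq> tm_a n ! (i + u - 1)}) \<ge> (2::real)^n / 4"
proof -
  have "real (4 * u) \<le> real (2 ^ n)"
    using assms(2) tm_length[of n] by simp
  then have "4 * u \<le> 2 ^ n" by (simp only: of_nat_le_iff)
  with assms(1) have "balanced n u" by (rule shifts_balanced)
  moreover have "card {i \<in> {1..2^n - u}. tm_a n ! (i - 1) = tm_a n ! (i + u - 1)} = agree (2^n - u) u"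
    using card_one_indexed_pairs[where R = "\<lambda>a b. tm_a n ! a = tm_a n ! b"] tm_a_equal_bits[of _ n u]
    unfolding agree_def by (auto intro!: arg_cong[where f = card])
  moreover have "card {i \<in> {1..2^n - u}. tm_a n ! (i - 1) \<noteq> tm_a n ! (i + u - 1)} = differ (2^n - u) u"
    using card_one_indexed_pairs[where R = "\<lambda>a b. tm_a n ! a \<noteq> tm_a n ! b"] tm_a_equal_bits[of _ n u]
    unfolding differ_def by (auto intro!: arg_cong[where f = card])
  ultimately show ?thesis
    unfolding balanced_def using real_quarter_bound by simp
qed

end
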